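(* Let $n\ge2$ and let $\varphi$ be a skew morphism of $\mathbb{Z}_n$ with even complexity and auto-order $m$. Then $m$ divides $n$, and $\varphi$ taken modulo $m$ is the trivial permutation of $\mathbb{Z}_m$, i.e. $\varphi(x)\equiv x\pmod m$ for all $x\in\mathbb{Z}_n$.
   Context: $\mathbb{Z}_n$ is the cyclic group of integers modulo $n$. A skew morphism of a finite group $G$ is a permutation $\varphi$ of $G$ fixing the identity such that for each $a\in G$ there is a non-negative integer $i_a$ with $\varphi(ab)=\varphi(a)\varphi^{i_a}(b)$ for all $b\in G$. ${\rm ord}(\varphi)$ is the order of $\langle\varphi\rangle$. If $\varphi$ is non-trivial, $\pi_\varphi(a)$ is the unique such $i_a\in\{1,\dots,{\rm ord}(\varphi)-1\}$; if $\varphi$ is the identity, $\pi_\varphi(a)=1$. Let $\sigma_\varphi(x,y)=\sum_{i=0}^{x-1}\pi_\varphi(\varphi^i(y))\in\mathbb{Z}_{{\rm ord}(\varphi)}$. For a skew morphism $\varphi$ of $\mathbb{Z}_n$, the derived skew morphism $\varphi'$ is the skew morphism of $\mathbb{Z}_{{\rm ord}(\varphi)}$ given by $\varphi'(a)=\sigma_\varphi(a,1)$. Set $\varphi^{(0)}=\varphi$, $\varphi^{(i+1)}=(\varphi^{(i)})'$. For $n\ge2$ the complexity of $\varphi$ is the unique non-negative integer $c$ such that $\varphi^{(c)}$ is a skew morphism of a non-trivial cyclic group $\mathbb{Z}_m$ and $\varphi^{(c+1)}$ is a skew morphism of $\mathbb{Z}_1$; then $\varphi^{(c)}$ is the identity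 of $\mathbb{Z}_m$, and $m$ is the auto-order of $\varphi$. For a divisor $m$ of $n$, "$\varphi$ taken modulo $m$" is the map $x \bmod m\mapsto \varphi(x)\bmod m$ on $\mathbb{Z}_m$ (when well defined). *)

theory Defs
  imports Main
begin

text \<open>Elements of the cyclic group Z_n are represented by the naturals 0..n-1,
  with group operation addition mod n.  A self-map of Z_n is a function
  nat => nat of which only the values on {..<n} matter.\<close>

definition skew_morphism :: "nat \<Rightarrow> (nat \<Rightarrow> nat) \<Rightarrow> bool" where
  "skew_morphism n \<phi> \<longleftrightarrow> n \<ge> 1 \<and> bij_betw \<phi> {..<n} {..<n} \<and> \<phi> 0 = 0 \<and>
     (\<forall>a<n. \<exists>i::nat. \<forall>b<n. \<phi> ((a + b) mod n) = (\<phi> a + (\<phi> ^^ i) b) mod n)"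

definition sk_ord :: "nat \<Rightarrow> (nat \<Rightarrow> nat) \<Rightarrow> nat" where
  "sk_ord n \<phi> = (LEAST k. 0 < k \<and> (\<forall>x<n. (\<phi> ^^ k) x = x))"

definition sk_pi :: "nat \<Rightarrow> (nat \<Rightarrow> nat) \<Rightarrow> nat \<Rightarrow> nat" where
  "sk_pi n \<phi> a = (if sk_ord n \<phi> = 1 then 1 else
     (THE i. 1 \<le> i \<and> i < sk_ord n \<phi> \<and>
        (\<forall>b<n. \<phi> ((a + b) mod n) = (\<phi> a + (\<phi> ^^ i) b) mod n)))"

definition sk_sigma :: "nat \<Rightarrow> (nat \<Rightarrow> nat) \<Rightarrow> nat \<Rightarrow> nat \<Rightarrow> nat" where
  "sk_sigma n \<phi> x y = (\<Sum>i<x. sk_pi n \<phi> ((\<phi> ^^ i) y)) mod sk_ord n \<phi>"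

definition sk_derived :: "nat \<Rightarrow> (nat \<Rightarrow> nat) \<Rightarrow> (nat \<Rightarrow> nat)" where
  "sk_derived n \<phi> = (\<lambda>a. sk_sigma n \<phi> a (1 mod n))"

primrec sk_iter :: "nat \<Rightarrow> nat \<Rightarrow> (nat \<Rightarrow> nat) \<Rightarrow> nat \<times> (nat \<Rightarrow> nat)" where
  "sk_iter 0 n \<phi> = (n, \<phi>)"
| "sk_iter (Suc k) n \<phi> = (let (m, \<psi>) = sk_iter k n \<phi> in (sk_ord m \<psi>, sk_derived m \<psi>))"

definition is_complexity :: "nat \<Rightarrow> (nat \<Rightarrow> nat) \<Rightarrow> nat \<Rightarrow> bool" where
  "is_complexity n \<phi> c \<longleftrightarrow> fst (sk_iter c n \<phi>) \<ge> 2 \<and> fst (sk_iter (Suc c) n \<phi>) = 1"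

definition auto_order :: "nat \<Rightarrow> (nat \<Rightarrow> nat) \<Rightarrow> nat" where
  "auto_order n \<phi> = fst (sk_iter (THE c. is_complexity n \<phi> c) n \<phi>)"

end

(* Let k = ord phi, let phi' be the derived skew morphism of Z_k and let
   sigma(j, b) = pi(b) + pi(phi b) + ... + pi(phi^(j-1) b) (unreduced).  From
   phi^j(b + c) = phi^j(b) + phi^sigma(j,b)(c) one gets
   sigma(a, y + z) = sigma(sigma(a, y), z) (mod k), hence (phi')^x(a) = sigma(a, x) mod k.
   Consequently pi(x) = (phi')^x(1) (mod k), and phi'(a + b) = phi'(a) + (phi')^(phi^a 1)(b),
   i.e. pi_phi'(a) = phi^a(1) (mod ord phi').
   If phi'' is trivial modulo m, then sigma_phi'(a, 1) = a (mod m), so pi_phi' = 1 (mod m)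
   along the orbit of 1; by the two congruences above phi^pi(x)(1) = 1 (mod m), and
   phi(x + 1) = phi(x) + phi^pi(x)(1) shows phi(x) = x (mod m).  As phi^(c) is the
   identity of Z_m, descending two derivations at a time from an even c gives the theorem. *)

theory Submission
  imports Defs "HOL-Combinatorics.Cycles"
begin

definition trivial_modulo :: "nat \<Rightarrow> nat \<Rightarrow> (nat \<Rightarrow> nat) \<Rightarrow> bool" where
  "trivial_modulo m n \<phi> \<longleftrightarrow> m dvd n \<and> (\<forall>x<n. \<phi> x mod m = x mod m)"

definition pi_sum :: "nat \<Rightarrow> (nat \<Rightarrow> nat) \<Rightarrow> nat \<Rightarrow> nat \<Rightarrow> nat" where
  "pi_sum n \<phi> j b = (\<Sum>i<j. sk_pi n \<phi> ((\<phi> ^^ i) b))"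

lemma sk_derived_eq_pi_sum: "sk_derived n \<phi> a = pi_sum n \<phi> a (1 mod n) mod sk_ord n \<phi>"
  by (simp add: sk_derived_def sk_sigma_def pi_sum_def)

lemma sk_derived_zero [simp]: "sk_derived n \<phi> 0 = 0"
  by (simp add: sk_derived_eq_pi_sum pi_sum_def)

lemma pi_sum_Suc: "pi_sum n \<phi> (Suc j) b = pi_sum n \<phi> j b + sk_pi n \<phi> ((\<phi> ^^ j) b)"
  by (simp add: pi_sum_def)

lemma pi_sum_add: "pi_sum n \<phi> (i + j) b = pi_sum n \<phi> i b + pi_sum n \<phi> j ((\<phi> ^^ i) b)"
proof (induction j)
  case (Suc j)
  have "(\<phi> ^^ (i + j)) b = (\<phi> ^^ j) ((\<phi> ^^ i) b)"
    by (metis add.commute comp_apply funpow_add)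
  with Suc show ?case
    by (simp add: pi_sum_Suc)
qed (simp add: pi_sum_def)

lemma add_mod_cancel_left:
  fixes c x y n :: nat
  shows "(c + x) mod n = (c + y) mod n \<Longrightarrow> x mod n = y mod n"
  by (simp add: nat_mod_eq_iff)

lemma add_mod_cancel_less:
  fixes c x y n :: nat
  assumes "x < n" "y < n" "(c + x) mod n = (c + y) mod n"
  shows "x = y"
  using add_mod_cancel_left[OF assms(3)] assms(1,2) by simp

locale cyclic_skew_morphism =
  fixes n :: nat and \<phi> :: "nat \<Rightarrow> nat"
  assumes skew: "skew_morphism n \<phi>"
begin

lemma n_pos: "0 < n"
  using skew by (simp add: skew_morphism_def)

lemma map_zero [simp]: "\<phi> 0 = 0"
  using skew by (simp add: skew_morphism_def)

lemma funpow_bij_betw: "bij_betw (\<phi> ^^ i) {..<n} {..<n}"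
  using skew by (simp add: skew_morphism_def bij_betw_funpow)

lemma funpow_less: "x < n \<Longrightarrow> (\<phi> ^^ i) x < n"
  using funpow_bij_betw by (auto simp: bij_betw_def)

lemma map_less: "x < n \<Longrightarrow> \<phi> x < n"
  using funpow_less[of _ 1] by simp

lemma funpow_zero [simp]: "(\<phi> ^^ i) 0 = 0"
  by (induction i) simp_all

lemma funpow_cancel: "x < n \<Longrightarrow> y < n \<Longrightarrow> (\<phi> ^^ i) x = (\<phi> ^^ i) y \<Longrightarrow> x = y"
  using funpow_bij_betw by (auto simp: bij_betw_def inj_on_def)

lemma ex_period: "\<exists>k>0. \<forall>x<n. (\<phi> ^^ k) x = x"
proof -
  define p where "p x = (if x < n then \<phi> x else x)" for x
  have "bij_betw \<phi> {..<n} {..<n}"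
    using funpow_bij_betw[of 1] by simp
  then have "bij_betw p {..<n} {..<n}"
    by (rule bij_betw_cong[THEN iffD1, rotated]) (simp add: p_def)
  then have "p permutes {..<n}"
    by (rule bij_imp_permutes) (simp add: p_def)
  then have "permutation p"
    unfolding permutation_permutes by blast
  then obtain k where k: "p ^^ k = id" "k > 0"
    by (rule permutation_is_nilpotent)
  have agree: "(p ^^ i) x = (\<phi> ^^ i) x" if "x < n" for i x
    by (induction i) (simp_all add: p_def funpow_less that)
  have "(\<phi> ^^ k) x = x" if "x < n" for x
    using agree[OF that, of k] k(1) by simp
  then show ?thesis
    using k(2) by blast
qed

lemma sk_ord_pos: "0 < sk_ord n \<phi>"
  and funpow_sk_ord: "x < n \<Longrightarrow> (\<phi> ^^ sk_ord n \<phi>) x = x"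
  using LeastI_ex[OF ex_period] by (simp_all add: sk_ord_def)

lemma funpow_mod_sk_ord: "x < n \<Longrightarrow> (\<phi> ^^ (j mod sk_ord n \<phi>)) x = (\<phi> ^^ j) x"
  by (rule funpow_mod_eq[OF funpow_sk_ord])

lemma sk_ord_dvd:
  assumes "\<And>x. x < n \<Longrightarrow> (\<phi> ^^ j) x = x"
  shows "sk_ord n \<phi> dvd j"
proof (rule ccontr)
  assume "\<not> sk_ord n \<phi> dvd j"
  then have "0 < j mod sk_ord n \<phi>" "j mod sk_ord n \<phi> < sk_ord n \<phi>"
    using sk_ord_pos by (simp_all add: mod_greater_zero_iff_not_dvd)
  moreover have "\<forall>x<n. (\<phi> ^^ (j mod sk_ord n \<phi>)) x = x"
    using assms funpow_mod_sk_ord by simp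
  ultimately show False
    unfolding sk_ord_def using not_less_Least by blast
qed

lemma funpow_eq_imp_mod_eq:
  assumes "\<And>x. x < n \<Longrightarrow> (\<phi> ^^ i) x = (\<phi> ^^ j) x"
  shows "i mod sk_ord n \<phi> = j mod sk_ord n \<phi>"
  using assms
proof (induction i j rule: linorder_wlog)
  case (le i j)
  have "(\<phi> ^^ (j - i)) x = x" if "x < n" for x
  proof (rule funpow_cancel[of _ _ i])
    have "(\<phi> ^^ i) ((\<phi> ^^ (j - i)) x) = (\<phi> ^^ j) x"
      using le.hyps by (metis comp_apply funpow_add le_add_diff_inverse)
    then show "(\<phi> ^^ i) ((\<phi> ^^ (j - i)) x) = (\<phi> ^^ i) x"
      using le.prems that by simp
  qed (simp_all add: funpow_less that)
  then have "sk_ord n \<phi> dvd j - i"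
    by (rule sk_ord_dvd)
  then show ?case
    by (metis mod_eq_dvd_iff_nat[OF le.hyps])
qed (metis)

lemma sk_ord_eq_1_iff: "sk_ord n \<phi> = 1 \<longleftrightarrow> (\<forall>x<n. \<phi> x = x)"
proof
  show "sk_ord n \<phi> = 1 \<Longrightarrow> \<forall>x<n. \<phi> x = x"
    using funpow_sk_ord by fastforce
  show "\<forall>x<n. \<phi> x = x \<Longrightarrow> sk_ord n \<phi> = 1"
    unfolding sk_ord_def by (rule Least_equality) auto
qed

lemma id_if_translation_at:
  assumes a: "a < n" and translation: "\<And>b. b < n \<Longrightarrow> \<phi> ((a + b) mod n) = (\<phi> a + b) mod n"
    and x: "x < n"
  shows "\<phi> x = x"
proof -
  have shift: "(\<phi> y + a) mod n = (\<phi> a + y) mod n" if "y < n" for y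
  proof -
    define b where "b = (y + (n - a)) mod n"
    have ab: "(a + b) mod n = y"
      using a that by (simp add: b_def mod_add_right_eq)
    then have "\<phi> y = (\<phi> a + b) mod n"
      using translation n_pos by (metis b_def mod_less_divisor)
    then have "(\<phi> y + a) mod n = ((\<phi> a + b) mod n + a) mod n"
      by (simp only:)
    also have "\<dots> = (\<phi> a + (a + b)) mod n"
      by (simp only: mod_add_left_eq add.assoc add.commute[of b a])
    also have "\<dots> = (\<phi> a + y) mod n"
      by (simp only: mod_add_right_eq[symmetric, of "\<phi> a" "a + b"] ab)
    finally show ?thesis .
  qed
  have "\<phi> a = a"
    using shift[of 0] a map_less[OF a] n_pos by simp
  then have "(a + \<phi> x) mod n = (a + x) mod n"
    using shift[OF x] by (simp add: ac_simps)
  then show ?thesis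
    using add_mod_cancel_less map_less x by blast
qed

lemma skew_exponent_mod_unique:
  assumes "\<And>b. b < n \<Longrightarrow> \<phi> ((a + b) mod n) = (\<phi> a + (\<phi> ^^ i) b) mod n"
    and "\<And>b. b < n \<Longrightarrow> \<phi> ((a + b) mod n) = (\<phi> a + (\<phi> ^^ j) b) mod n"
  shows "i mod sk_ord n \<phi> = j mod sk_ord n \<phi>"
proof (rule funpow_eq_imp_mod_eq)
  fix x assume x: "x < n"
  have "(\<phi> a + (\<phi> ^^ i) x) mod n = (\<phi> a + (\<phi> ^^ j) x) mod n"
    using assms[OF x] by simp
  then show "(\<phi> ^^ i) x = (\<phi> ^^ j) x"
    using add_mod_cancel_less funpow_less x by blast
qed

lemma map_add_sk_pi:
  assumes a: "a < n" and b: "b < n"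
  shows "\<phi> ((a + b) mod n) = (\<phi> a + (\<phi> ^^ sk_pi n \<phi> a) b) mod n"
proof (cases "sk_ord n \<phi> = 1")
  case True
  then have "\<forall>x<n. \<phi> x = x"
    using sk_ord_eq_1_iff by blast
  then show ?thesis
    using True a b n_pos by (simp add: sk_pi_def)
next
  case False
  define P where "P j \<longleftrightarrow> (\<forall>b<n. \<phi> ((a + b) mod n) = (\<phi> a + (\<phi> ^^ j) b) mod n)" for j
  obtain i where "P i"
    using skew a unfolding skew_morphism_def P_def by blast
  then have Pi: "P (i mod sk_ord n \<phi>)"
    by (simp add: P_def funpow_mod_sk_ord)
  have "i mod sk_ord n \<phi> \<noteq> 0"
  proof
    assume "i mod sk_ord n \<phi> = 0"
    then have "\<phi> ((a + b) mod n) = (\<phi> a + b) mod n" if "b < n" for b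
      using Pi that by (simp add: P_def)
    then have "\<forall>x<n. \<phi> x = x"
      using id_if_translation_at[OF a] by blast
    then show False
      using False sk_ord_eq_1_iff by blast
  qed
  moreover have "j = i mod sk_ord n \<phi>" if j: "j < sk_ord n \<phi>" "P j" for j
  proof -
    have "j mod sk_ord n \<phi> = i mod sk_ord n \<phi> mod sk_ord n \<phi>"
      using j(2) Pi unfolding P_def by (intro skew_exponent_mod_unique[of a]) blast+
    then show ?thesis
      using j(1) by simp
  qed
  ultimately have "\<exists>!j. 1 \<le> j \<and> j < sk_ord n \<phi> \<and> P j"
    using Pi sk_ord_pos by (intro ex1I[of _ "i mod sk_ord n \<phi>"]) auto
  moreover have "sk_pi n \<phi> a = (THE j. 1 \<le> j \<and> j < sk_ord n \<phi> \<and> P j)"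
    using False unfolding sk_pi_def P_def by simp
  ultimately have "1 \<le> sk_pi n \<phi> a \<and> sk_pi n \<phi> a < sk_ord n \<phi> \<and> P (sk_pi n \<phi> a)"
    using theI'[of "\<lambda>j. 1 \<le> j \<and> j < sk_ord n \<phi> \<and> P j"] by simp
  then show ?thesis
    using b by (simp add: P_def)
qed

lemma sk_pi_zero: "sk_pi n \<phi> 0 mod sk_ord n \<phi> = 1 mod sk_ord n \<phi>"
proof (rule skew_exponent_mod_unique)
  fix b assume b: "b < n"
  show "\<phi> ((0 + b) mod n) = (\<phi> 0 + (\<phi> ^^ sk_pi n \<phi> 0) b) mod n"
    using map_add_sk_pi[OF n_pos b] .
  show "\<phi> ((0 + b) mod n) = (\<phi> 0 + (\<phi> ^^ 1) b) mod n"
    using b map_less by simp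
qed

lemma funpow_add_pi_sum:
  assumes b: "b < n" and c: "c < n"
  shows "(\<phi> ^^ j) ((b + c) mod n) = ((\<phi> ^^ j) b + (\<phi> ^^ pi_sum n \<phi> j b) c) mod n"
proof (induction j)
  case 0
  then show ?case by (simp add: pi_sum_def)
next
  case (Suc j)
  have "(\<phi> ^^ Suc j) ((b + c) mod n) = \<phi> (((\<phi> ^^ j) b + (\<phi> ^^ pi_sum n \<phi> j b) c) mod n)"
    using Suc by simp
  also have "\<dots> = (\<phi> ((\<phi> ^^ j) b) + (\<phi> ^^ (sk_pi n \<phi> ((\<phi> ^^ j) b) + pi_sum n \<phi> j b)) c) mod n"
    by (simp add: map_add_sk_pi funpow_less b c funpow_add)
  finally show ?case
    by (simp add: pi_sum_Suc ac_simps)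
qed

lemma pi_sum_sk_ord: "b < n \<Longrightarrow> pi_sum n \<phi> (sk_ord n \<phi>) b mod sk_ord n \<phi> = 0"
proof -
  assume b: "b < n"
  have "(\<phi> ^^ pi_sum n \<phi> (sk_ord n \<phi>) b) c = c" if c: "c < n" for c
  proof (rule add_mod_cancel_less[where c = b])
    show "(b + (\<phi> ^^ pi_sum n \<phi> (sk_ord n \<phi>) b) c) mod n = (b + c) mod n"
      using funpow_add_pi_sum[OF b c, of "sk_ord n \<phi>"] b c n_pos by (simp add: funpow_sk_ord)
  qed (simp_all add: funpow_less c)
  then show ?thesis
    using sk_ord_dvd by simp
qed

lemma pi_sum_mod_sk_ord:
  assumes b: "b < n"
  shows "pi_sum n \<phi> j b mod sk_ord n \<phi> = pi_sum n \<phi> (j mod sk_ord n \<phi>) b mod sk_ord n \<phi>"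
proof -
  let ?k = "sk_ord n \<phi>"
  have "pi_sum n \<phi> (r + q * ?k) b mod ?k = pi_sum n \<phi> r b mod ?k" for q r
  proof (induction q)
    case (Suc q)
    have "r + Suc q * ?k = (r + q * ?k) + ?k"
      by simp
    then have "pi_sum n \<phi> (r + Suc q * ?k) b mod ?k
        = (pi_sum n \<phi> (r + q * ?k) b + pi_sum n \<phi> ?k ((\<phi> ^^ (r + q * ?k)) b) mod ?k) mod ?k"
      by (simp only: pi_sum_add mod_add_right_eq)
    also have "\<dots> = pi_sum n \<phi> r b mod ?k"
      using pi_sum_sk_ord[OF funpow_less[OF b]] Suc.IH by simp
    finally show ?case .
  qed simp
  from this[where q = "j div ?k" and r = "j mod ?k"] show ?thesis
    by (simp only: mod_div_mult_eq)
qed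

lemma pi_sum_at_zero: "pi_sum n \<phi> a 0 mod sk_ord n \<phi> = a mod sk_ord n \<phi>"
proof -
  have "pi_sum n \<phi> a 0 = a * sk_pi n \<phi> 0"
    by (simp add: pi_sum_def)
  then show ?thesis
    using sk_pi_zero by (metis mod_mult_right_eq mult.right_neutral)
qed

lemma pi_sum_add_point:
  assumes y: "y < n" and z: "z < n"
  shows "pi_sum n \<phi> a ((y + z) mod n) mod sk_ord n \<phi> = pi_sum n \<phi> (pi_sum n \<phi> a y) z mod sk_ord n \<phi>"
proof (rule funpow_eq_imp_mod_eq)
  fix c assume c: "c < n"
  define s w where "s = pi_sum n \<phi> a y" and "w = (y + z) mod n"
  have w: "w < n"
    using n_pos by (simp add: w_def)
  have "(\<phi> ^^ a) ((w + c) mod n) = ((\<phi> ^^ a) w + (\<phi> ^^ pi_sum n \<phi> a w) c) mod n"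
    by (rule funpow_add_pi_sum[OF w c])
  also have "(\<phi> ^^ a) w = ((\<phi> ^^ a) y + (\<phi> ^^ s) z) mod n"
    unfolding s_def w_def by (rule funpow_add_pi_sum[OF y z])
  finally have expand_first:
    "(\<phi> ^^ a) ((w + c) mod n) = ((\<phi> ^^ a) y + (\<phi> ^^ s) z + (\<phi> ^^ pi_sum n \<phi> a w) c) mod n"
    by (simp add: mod_add_left_eq)
  have "(w + c) mod n = (y + (z + c) mod n) mod n"
    by (simp only: w_def mod_add_left_eq mod_add_right_eq add.assoc)
  then have "(\<phi> ^^ a) ((w + c) mod n) = ((\<phi> ^^ a) y + (\<phi> ^^ s) ((z + c) mod n)) mod n"
    using funpow_add_pi_sum[OF y, of "(z + c) mod n"] n_pos by (simp add: s_def)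
  also have "(\<phi> ^^ s) ((z + c) mod n) = ((\<phi> ^^ s) z + (\<phi> ^^ pi_sum n \<phi> s z) c) mod n"
    by (rule funpow_add_pi_sum[OF z c])
  finally have expand_second:
    "(\<phi> ^^ a) ((w + c) mod n) = ((\<phi> ^^ a) y + (\<phi> ^^ s) z + (\<phi> ^^ pi_sum n \<phi> s z) c) mod n"
    by (simp add: mod_add_right_eq add.assoc)
  show "(\<phi> ^^ pi_sum n \<phi> a w) c = (\<phi> ^^ pi_sum n \<phi> s z) c"
    using expand_first expand_second c funpow_less by (metis add_mod_cancel_less)
qed

lemma sk_derived_less: "sk_derived n \<phi> a < sk_ord n \<phi>"
  using sk_ord_pos by (simp add: sk_derived_eq_pi_sum)

lemma funpow_sk_derived:
  assumes a: "a < sk_ord n \<phi>"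
  shows "(sk_derived n \<phi> ^^ x) a = pi_sum n \<phi> a (x mod n) mod sk_ord n \<phi>"
proof (induction x)
  case 0
  then show ?case
    using pi_sum_at_zero a by simp
next
  case (Suc x)
  have u: "1 mod n < n" and xn: "x mod n < n"
    using n_pos by simp_all
  have "(sk_derived n \<phi> ^^ Suc x) a
      = pi_sum n \<phi> (pi_sum n \<phi> a (x mod n) mod sk_ord n \<phi>) (1 mod n) mod sk_ord n \<phi>"
    by (simp only: funpow.simps(2) comp_apply sk_derived_eq_pi_sum Suc)
  also have "\<dots> = pi_sum n \<phi> (pi_sum n \<phi> a (x mod n)) (1 mod n) mod sk_ord n \<phi>"
    by (rule pi_sum_mod_sk_ord[OF u, symmetric])
  also have "\<dots> = pi_sum n \<phi> a ((x mod n + 1 mod n) mod n) mod sk_ord n \<phi>"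
    by (rule pi_sum_add_point[OF xn u, symmetric])
  also have "(x mod n + 1 mod n) mod n = Suc x mod n"
    by (simp only: mod_add_eq Suc_eq_plus1)
  finally show ?case .
qed

lemma funpow_n_sk_derived: "a < sk_ord n \<phi> \<Longrightarrow> (sk_derived n \<phi> ^^ n) a = a"
  by (simp add: funpow_sk_derived pi_sum_at_zero)

lemma sk_derived_map_add:
  assumes a: "a < sk_ord n \<phi>" and b: "b < sk_ord n \<phi>"
  shows "sk_derived n \<phi> ((a + b) mod sk_ord n \<phi>)
    = (sk_derived n \<phi> a + (sk_derived n \<phi> ^^ (\<phi> ^^ a) (1 mod n)) b) mod sk_ord n \<phi>"
proof -
  let ?k = "sk_ord n \<phi>" and ?u = "1 mod n"
  have u: "?u < n"
    using n_pos by simp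
  have "sk_derived n \<phi> ((a + b) mod ?k) = pi_sum n \<phi> (a + b) ?u mod ?k"
    using pi_sum_mod_sk_ord[OF u, of "a + b"] by (simp add: sk_derived_eq_pi_sum)
  also have "\<dots> = (pi_sum n \<phi> a ?u + pi_sum n \<phi> b ((\<phi> ^^ a) ?u)) mod ?k"
    by (simp add: pi_sum_add)
  also have "\<dots> = (sk_derived n \<phi> a + (sk_derived n \<phi> ^^ (\<phi> ^^ a) ?u) b) mod ?k"
    using funpow_sk_derived[OF b, of "(\<phi> ^^ a) ?u"] funpow_less[OF u]
    by (simp add: sk_derived_eq_pi_sum mod_add_eq)
  finally show ?thesis .
qed

lemma sk_derived: "cyclic_skew_morphism (sk_ord n \<phi>) (sk_derived n \<phi>)"
proof unfold_locales
  let ?k = "sk_ord n \<phi>" and ?\<psi> = "sk_derived n \<phi>"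
  have "inj_on ?\<psi> {..<?k}"
  proof (rule inj_onI)
    fix a b assume "a \<in> {..<?k}" "b \<in> {..<?k}" "?\<psi> a = ?\<psi> b"
    moreover obtain n' where "n = Suc n'"
      using n_pos gr0_implies_Suc by blast
    ultimately show "a = b"
      using funpow_n_sk_derived by (metis funpow_Suc_right comp_apply lessThan_iff)
  qed
  moreover have "?\<psi> ` {..<?k} \<subseteq> {..<?k}"
    using sk_derived_less by auto
  ultimately have "bij_betw ?\<psi> {..<?k} {..<?k}"
    by (simp add: bij_betw_def endo_inj_surj)
  moreover have "\<forall>a<?k. \<exists>i. \<forall>b<?k. ?\<psi> ((a + b) mod ?k) = (?\<psi> a + (?\<psi> ^^ i) b) mod ?k"
    using sk_derived_map_add by blast
  ultimately show "skew_morphism ?k ?\<psi>"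
    using sk_ord_pos by (simp add: skew_morphism_def)
qed

lemma sk_pi_sk_derived:
  assumes a: "a < sk_ord n \<phi>"
  shows "sk_pi (sk_ord n \<phi>) (sk_derived n \<phi>) a mod sk_ord (sk_ord n \<phi>) (sk_derived n \<phi>)
    = (\<phi> ^^ a) (1 mod n) mod sk_ord (sk_ord n \<phi>) (sk_derived n \<phi>)"
proof -
  interpret \<psi>: cyclic_skew_morphism "sk_ord n \<phi>" "sk_derived n \<phi>"
    by (rule sk_derived)
  show ?thesis
  proof (rule \<psi>.skew_exponent_mod_unique)
    fix b assume b: "b < sk_ord n \<phi>"
    show "sk_derived n \<phi> ((a + b) mod sk_ord n \<phi>)
      = (sk_derived n \<phi> a + (sk_derived n \<phi> ^^ sk_pi (sk_ord n \<phi>) (sk_derived n \<phi>) a) b) mod sk_ord n \<phi>"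
      by (rule \<psi>.map_add_sk_pi[OF a b])
    show "sk_derived n \<phi> ((a + b) mod sk_ord n \<phi>)
      = (sk_derived n \<phi> a + (sk_derived n \<phi> ^^ (\<phi> ^^ a) (1 mod n)) b) mod sk_ord n \<phi>"
      by (rule sk_derived_map_add[OF a b])
  qed
qed

lemma sk_pi_mod_sk_ord: "x < n \<Longrightarrow> sk_pi n \<phi> x mod sk_ord n \<phi> = (sk_derived n \<phi> ^^ x) (1 mod sk_ord n \<phi>)"
  using funpow_sk_derived[of "1 mod sk_ord n \<phi>" x] sk_ord_pos
  by (cases "sk_ord n \<phi> = 1") (simp_all add: pi_sum_def)

lemma sk_ord_sk_derived_dvd: "sk_ord (sk_ord n \<phi>) (sk_derived n \<phi>) dvd n"
proof -
  interpret \<psi>: cyclic_skew_morphism "sk_ord n \<phi>" "sk_derived n \<phi>"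
    by (rule sk_derived)
  show ?thesis
    using funpow_n_sk_derived by (rule \<psi>.sk_ord_dvd)
qed

lemma sk_pi_orbit_mod_if_derived_trivial:
  assumes "trivial_modulo m (sk_ord n \<phi>) (sk_derived n \<phi>)"
  shows "sk_pi n \<phi> ((\<phi> ^^ a) (1 mod n)) mod m = 1 mod m"
proof -
  let ?k = "sk_ord n \<phi>" and ?u = "1 mod n"
  have m: "m dvd ?k" and trivial: "\<And>a. a < ?k \<Longrightarrow> sk_derived n \<phi> a mod m = a mod m"
    using assms by (simp_all add: trivial_modulo_def)
  have sum_mod: "pi_sum n \<phi> a ?u mod m = a mod m" for a
  proof -
    have "pi_sum n \<phi> a ?u mod m = pi_sum n \<phi> a ?u mod ?k mod m"
      using m by (simp add: mod_mod_cancel)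
    also have "\<dots> = sk_derived n \<phi> (a mod ?k) mod m"
      using pi_sum_mod_sk_ord[of ?u a] n_pos by (simp add: sk_derived_eq_pi_sum)
    also have "\<dots> = a mod ?k mod m"
      using trivial sk_ord_pos by simp
    also have "\<dots> = a mod m"
      using m by (simp add: mod_mod_cancel)
    finally show ?thesis .
  qed
  have "(a + sk_pi n \<phi> ((\<phi> ^^ a) ?u)) mod m = (pi_sum n \<phi> a ?u + sk_pi n \<phi> ((\<phi> ^^ a) ?u)) mod m"
    using sum_mod[of a] by (metis mod_add_left_eq)
  also have "\<dots> = (a + 1) mod m"
    using sum_mod[of "Suc a"] by (simp add: pi_sum_Suc)
  finally show ?thesis
    by (rule add_mod_cancel_left)
qed

lemma trivial_modulo_if_funpow_sk_pi:
  assumes m: "m dvd n" and step: "\<And>x. x < n \<Longrightarrow> (\<phi> ^^ sk_pi n \<phi> x) (1 mod n) mod m = 1 mod m"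
  shows "trivial_modulo m n \<phi>"
proof -
  have "\<phi> x mod m = x mod m" if "x < n" for x
    using that
  proof (induction x)
    case (Suc x)
    then have x: "x < n" and u: "1 mod n < n"
      by simp_all
    have "\<phi> (Suc x) = \<phi> ((x + 1 mod n) mod n)"
      using Suc.prems by simp
    also have "\<dots> = (\<phi> x + (\<phi> ^^ sk_pi n \<phi> x) (1 mod n)) mod n"
      by (rule map_add_sk_pi[OF x u])
    finally have "\<phi> (Suc x) mod m = (\<phi> x mod m + (\<phi> ^^ sk_pi n \<phi> x) (1 mod n) mod m) mod m"
      using m by (simp add: mod_mod_cancel mod_add_eq)
    also have "\<dots> = (x mod m + 1 mod m) mod m"
      by (simp only: Suc.IH[OF x] step[OF x])
    also have "\<dots> = Suc x mod m"
      by (simp only: mod_add_eq Suc_eq_plus1)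
    finally show ?case .
  qed simp
  with m show ?thesis
    by (simp add: trivial_modulo_def)
qed

lemma trivial_modulo_if_second_derived:
  assumes "trivial_modulo m (sk_ord (sk_ord n \<phi>) (sk_derived n \<phi>))
    (sk_derived (sk_ord n \<phi>) (sk_derived n \<phi>))"
  shows "trivial_modulo m n \<phi>"
proof (rule trivial_modulo_if_funpow_sk_pi)
  interpret \<psi>: cyclic_skew_morphism "sk_ord n \<phi>" "sk_derived n \<phi>"
    by (rule sk_derived)
  let ?k = "sk_ord n \<phi>" and ?\<psi> = "sk_derived n \<phi>" and ?u = "1 mod n"
  have m: "m dvd sk_ord ?k ?\<psi>"
    using assms by (simp add: trivial_modulo_def)
  then show "m dvd n"
    using sk_ord_sk_derived_dvd by (rule dvd_trans)
  fix x assume x: "x < n"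
  define j where "j = (?\<psi> ^^ x) (1 mod ?k)"
  have j: "j < ?k"
    unfolding j_def by (rule \<psi>.funpow_less[OF mod_less_divisor[OF sk_ord_pos]])
  have u: "?u < n"
    using n_pos by simp
  have "(\<phi> ^^ sk_pi n \<phi> x) ?u = (\<phi> ^^ j) ?u"
    using funpow_mod_sk_ord[OF u, of "sk_pi n \<phi> x"] sk_pi_mod_sk_ord[OF x] by (simp only: j_def)
  then have "(\<phi> ^^ sk_pi n \<phi> x) ?u mod m = (\<phi> ^^ j) ?u mod m"
    by (simp only:)
  also have "\<dots> = (\<phi> ^^ j) ?u mod sk_ord ?k ?\<psi> mod m"
    by (simp only: mod_mod_cancel[OF m])
  also have "\<dots> = sk_pi ?k ?\<psi> j mod sk_ord ?k ?\<psi> mod m"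
    by (simp only: sk_pi_sk_derived[OF j])
  also have "\<dots> = sk_pi ?k ?\<psi> j mod m"
    by (simp only: mod_mod_cancel[OF m])
  also have "\<dots> = 1 mod m"
    unfolding j_def by (rule \<psi>.sk_pi_orbit_mod_if_derived_trivial[OF assms])
  finally show "(\<phi> ^^ sk_pi n \<phi> x) ?u mod m = 1 mod m" .
qed

end

lemma sk_iter_Suc_shift: "sk_iter (Suc i) n \<phi> = sk_iter i (sk_ord n \<phi>) (sk_derived n \<phi>)"
proof (induction i)
  case (Suc i)
  have "sk_iter (Suc (Suc i)) n \<phi> = (let (m, \<psi>) = sk_iter (Suc i) n \<phi> in (sk_ord m \<psi>, sk_derived m \<psi>))"
    by (rule sk_iter.simps(2))
  also have "\<dots> = (let (m, \<psi>) = sk_iter i (sk_ord n \<phi>) (sk_derived n \<phi>) in (sk_ord m \<psi>, sk_derived m \<psi>))"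
    by (simp only: Suc.IH)
  also have "\<dots> = sk_iter (Suc i) (sk_ord n \<phi>) (sk_derived n \<phi>)"
    by (rule sk_iter.simps(2)[symmetric])
  finally show ?case .
qed simp

lemma fst_sk_iter_Suc: "fst (sk_iter (Suc i) n \<phi>) = sk_ord (fst (sk_iter i n \<phi>)) (snd (sk_iter i n \<phi>))"
  by (simp add: split_def Let_def)

lemma cyclic_skew_morphism_sk_iter:
  "cyclic_skew_morphism n \<phi> \<Longrightarrow> cyclic_skew_morphism (fst (sk_iter i n \<phi>)) (snd (sk_iter i n \<phi>))"
proof (induction i arbitrary: n \<phi>)
  case (Suc i)
  show ?case
    unfolding sk_iter_Suc_shift by (rule Suc.IH[OF cyclic_skew_morphism.sk_derived[OF Suc.prems]])
qed simp

lemma trivial_modulo_if_even_iterate: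
  assumes "cyclic_skew_morphism n \<phi>"
    and "trivial_modulo m (fst (sk_iter (2 * j) n \<phi>)) (snd (sk_iter (2 * j) n \<phi>))"
  shows "trivial_modulo m n \<phi>"
  using assms
proof (induction j arbitrary: n \<phi>)
  case (Suc j)
  interpret cyclic_skew_morphism n \<phi>
    by (rule Suc.prems(1))
  interpret \<psi>: cyclic_skew_morphism "sk_ord n \<phi>" "sk_derived n \<phi>"
    by (rule sk_derived)
  have "2 * Suc j = Suc (Suc (2 * j))"
    by simp
  then have "sk_iter (2 * Suc j) n \<phi>
      = sk_iter (2 * j) (sk_ord (sk_ord n \<phi>) (sk_derived n \<phi>)) (sk_derived (sk_ord n \<phi>) (sk_derived n \<phi>))"
    by (simp only: sk_iter_Suc_shift)
  then have "trivial_modulo m (sk_ord (sk_ord n \<phi>) (sk_derived n \<phi>))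
      (sk_derived (sk_ord n \<phi>) (sk_derived n \<phi>))"
    using Suc.IH[OF \<psi>.sk_derived] Suc.prems(2) by simp
  then show ?case
    by (rule trivial_modulo_if_second_derived)
qed simp

lemma fst_sk_iter_eq_1_mono:
  assumes "cyclic_skew_morphism n \<phi>" and "fst (sk_iter i n \<phi>) = 1" and "i \<le> j"
  shows "fst (sk_iter j n \<phi>) = 1"
  using assms(3)
proof (induction j rule: dec_induct)
  case (step j)
  interpret it: cyclic_skew_morphism "fst (sk_iter j n \<phi>)" "snd (sk_iter j n \<phi>)"
    by (rule cyclic_skew_morphism_sk_iter[OF assms(1)])
  show ?case
    unfolding fst_sk_iter_Suc using it.sk_ord_eq_1_iff step.IH by simp
qed (rule assms(2))

lemma complexity_unique:
  assumes "cyclic_skew_morphism n \<phi>" and "is_complexity n \<phi> c" and "is_complexity n \<phi> c'"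
  shows "c' = c"
proof (rule ccontr)
  have c: "2 \<le> fst (sk_iter c n \<phi>)" "fst (sk_iter (Suc c) n \<phi>) = 1"
    and c': "2 \<le> fst (sk_iter c' n \<phi>)" "fst (sk_iter (Suc c') n \<phi>) = 1"
    using assms(2,3) unfolding is_complexity_def by blast+
  assume "c' \<noteq> c"
  then consider "Suc c \<le> c'" | "Suc c' \<le> c"
    by linarith
  then show False
  proof cases
    case 1
    then show False
      using fst_sk_iter_eq_1_mono[OF assms(1) c(2)] c'(1) by fastforce
  next
    case 2
    then show False
      using fst_sk_iter_eq_1_mono[OF assms(1) c'(2)] c(1) by fastforce
  qed
qed

lemma auto_order_eq:
  assumes "cyclic_skew_morphism n \<phi>" and "is_complexity n \<phi> c"
  shows "auto_order n \<phi> = fst (sk_iter c n \<phi>)"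
proof -
  have "(THE c. is_complexity n \<phi> c) = c"
    using assms complexity_unique by (intro the_equality) blast+
  then show ?thesis
    by (simp add: auto_order_def)
qed

theorem lemma4p2:
  fixes n c m :: nat and \<phi> :: "nat \<Rightarrow> nat"
  assumes "n \<ge> 2" and "skew_morphism n \<phi>"
    and "is_complexity n \<phi> c" and "even c"
    and "m = auto_order n \<phi>"
  shows "m dvd n \<and> (\<forall>x<n. \<phi> x mod m = x mod m)"
proof -
  have skew: "cyclic_skew_morphism n \<phi>"
    using assms(2) by (rule cyclic_skew_morphism.intro)
  interpret final: cyclic_skew_morphism "fst (sk_iter c n \<phi>)" "snd (sk_iter c n \<phi>)"
    using skew by (rule cyclic_skew_morphism_sk_iter)
  have m: "m = fst (sk_iter c n \<phi>)"
    using auto_order_eq[OF skew assms(3)] assms(5) by simp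
  have "sk_ord (fst (sk_iter c n \<phi>)) (snd (sk_iter c n \<phi>)) = 1"
    using assms(3) unfolding is_complexity_def fst_sk_iter_Suc by simp
  then have "trivial_modulo m (fst (sk_iter c n \<phi>)) (snd (sk_iter c n \<phi>))"
    using final.sk_ord_eq_1_iff m by (simp add: trivial_modulo_def)
  moreover obtain j where "c = 2 * j"
    using assms(4) by (rule evenE)
  ultimately have "trivial_modulo m n \<phi>"
    using trivial_modulo_if_even_iterate[OF skew] by simp
  then show ?thesis
    by (simp add: trivial_modulo_def)
qed

end
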